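(* Let $s\in\{+1,-1\}$, $d\ge1$, and let $f\in\mathcal A_s(d)$ be radial with $\widehat f=sf$ and $f(0)=0$. Suppose there exists a sequence $\{x_n\}_{n\in\mathbb{N}}\subseteq\mathbb{R}^d\setminus\{0\}$ with $x_n\to0$ and $s f(x_n)\ge 0$ for all $n$. Then $\int_{\mathbb{R}^d}|y|^2|f(y)|\,dy<\infty$ and $$\int_{\mathbb{R}^d}|y|^2 f(y)\,dy\le 0.$$
   Context: Fourier transform: $\widehat f(\xi)=\int_{\mathbb{R}^d} f(x)e^{-2\pi i\langle x,\xi\rangle}\,dx$. Eventually nonnegative means $\ge0$ for all sufficiently large $|x|$. $\mathcal A_+(d)$: functions $f:\mathbb{R}^d\to\mathbb{R}$ with $f,\widehat f\in L^1$, $\widehat f$ real-valued, $f$ eventually nonnegative with $\widehat f(0)\le0$, and $\widehat f$ eventually nonnegative with $f(0)\le0$. $\mathcal A_-(d)$: functions $f:\mathbb{R}^d\to\mathbb{R}$ with $f,\widehat f\in L^1$, $\widehat f$ real-valued, $f$ eventually nonnegative with $\widehat f(0)\le0$, and $-\widehat f$ eventually nonnegative with $f(0)\ge0$. Here $\mathcal A_{+1}=\mathcal A_+$, $\mathcal A_{-1}=\mathcal A_-$. *)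

theory Defs
  imports "HOL-Analysis.Analysis"
begin

text \<open>Fourier transform with the convention
  \<open>\<hat>f(\<xi>) = \<integral> f(x) e^{-2\<pi> i \<langle>x,\<xi>\<rangle>} dx\<close>, on a Euclidean space of dimension d = DIM('a).\<close>
definition fourier :: "('a::euclidean_space \<Rightarrow> real) \<Rightarrow> 'a \<Rightarrow> complex" where
  "fourier f \<xi> = (LINT x|lborel. complex_of_real (f x) * cis (- 2 * pi * (x \<bullet> \<xi>)))"

definition eventually_nonneg :: "('a::real_normed_vector \<Rightarrow> real) \<Rightarrow> bool" where
  "eventually_nonneg g \<longleftrightarrow> (\<exists>R. \<forall>x. R \<le> norm x \<longrightarrow> 0 \<le> g x)"

definition radial :: "('a::real_normed_vector \<Rightarrow> real) \<Rightarrow> bool" where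
  "radial f \<longleftrightarrow> (\<forall>x y. norm x = norm y \<longrightarrow> f x = f y)"

definition admissible :: "('a::euclidean_space \<Rightarrow> real) \<Rightarrow> bool" where
  "admissible f \<longleftrightarrow> integrable lborel f \<and> integrable lborel (fourier f)
     \<and> (\<forall>\<xi>. Im (fourier f \<xi>) = 0)"

definition A_plus :: "('a::euclidean_space \<Rightarrow> real) set" where
  "A_plus = {f. admissible f
     \<and> eventually_nonneg f \<and> Re (fourier f 0) \<le> 0
     \<and> eventually_nonneg (\<lambda>\<xi>. Re (fourier f \<xi>)) \<and> f 0 \<le> 0}"

definition A_minus :: "('a::euclidean_space \<Rightarrow> real) set" where
  "A_minus = {f. admissible f
     \<and> eventually_nonneg f \<and> Re (fourier f 0) \<le> 0
     \<and> eventually_nonneg (\<lambda>\<xi>. - Re (fourier f \<xi>)) \<and> 0 \<le> f 0}"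

definition A_s :: "real \<Rightarrow> ('a::euclidean_space \<Rightarrow> real) set" where
  "A_s s = (if s = 1 then A_plus else A_minus)"

end

theory Submission
  imports Defs "HOL-Real_Asymp.Real_Asymp"
begin

text \<open>Since \<open>\<hat>f = s f\<close> is real, \<open>Re \<hat>f(\<xi>) = \<integral> f(y) cos(2\<pi> y\<cdot>\<xi>) dy\<close>. Fix a unit vector \<open>e\<close> and put
  \<open>t\<^sub>n = |x\<^sub>n|\<close>. By radiality \<open>\<hat>f(t\<^sub>n e) = s f(x\<^sub>n) \<ge> 0 = s f(0) = \<hat>f(0)\<close>, that is
  \<open>\<integral> f(y) (1 - cos(2\<pi> t\<^sub>n y\<cdot>e)) / t\<^sub>n\<^sup>2 dy \<le> 0\<close>. The integrands converge to
  \<open>2\<pi>\<^sup>2 (y\<cdot>e)\<^sup>2 f(y)\<close>, and they are bounded below by an integrable function: outside a ball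
  \<open>f \<ge> 0\<close>, and inside it \<open>1 - cos u \<le> u\<^sup>2/2\<close> gives the bound \<open>-2\<pi>\<^sup>2 (y\<cdot>e)\<^sup>2 |f(y)|\<close>, which is
  a bounded multiple of \<open>|f|\<close>. Fatou's lemma therefore shows that \<open>(y\<cdot>e)\<^sup>2 f(y)\<close> is integrable with
  nonpositive integral, and summing over an orthonormal basis gives the claim for \<open>|y|\<^sup>2 f(y)\<close>.\<close>

lemma one_minus_cos_le: "1 - cos (x::real) \<le> x\<^sup>2 / 2"
proof -
  have "\<bar>sin (x / 2)\<bar> \<le> \<bar>x / 2\<bar>" by (rule abs_sin_x_le_abs_x)
  then have "(sin (x / 2))\<^sup>2 \<le> (x / 2)\<^sup>2" by (metis power2_abs abs_ge_zero power_mono)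
  then show ?thesis using cos_double_sin[of "x / 2"] by (simp add: power_divide)
qed

lemma mult_one_minus_cos_div_square_ge: "- (\<bar>z\<bar> * u\<^sup>2 / 2) \<le> z * (1 - cos (t * u)) / (t::real)\<^sup>2"
proof (cases "t = 0")
  case False
  have "\<bar>z\<bar> * (1 - cos (t * u)) / t\<^sup>2 \<le> \<bar>z\<bar> * ((t * u)\<^sup>2 / 2) / t\<^sup>2"
    by (intro divide_right_mono mult_left_mono one_minus_cos_le) auto
  also have "\<dots> = \<bar>z\<bar> * u\<^sup>2 / 2"
    using False by (simp add: power_mult_distrib)
  finally have "\<bar>z * (1 - cos (t * u)) / t\<^sup>2\<bar> \<le> \<bar>z\<bar> * u\<^sup>2 / 2"
    by (simp add: abs_mult)
  then show ?thesis
    by (metis abs_le_iff minus_le_iff)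
qed simp

lemma tendsto_one_minus_cos_div_square:
  "((\<lambda>t. (1 - cos (t * c)) / t\<^sup>2) \<longlongrightarrow> c\<^sup>2 / 2) (at (0::real))"
proof (cases "c = 0")
  case False
  have "((\<lambda>u::real. (1 - cos u) / u\<^sup>2) \<longlongrightarrow> 1 / 2) (at 0)" by real_asymp
  moreover have "filterlim (\<lambda>t. t * c) (at 0) (at (0::real))"
    using False by (intro filterlim_atI) (auto intro!: tendsto_eq_intros simp: eventually_at_filter)
  ultimately have "((\<lambda>t. (1 - cos (t * c)) / (t * c)\<^sup>2) \<longlongrightarrow> 1 / 2) (at 0)"
    by (rule filterlim_compose)
  then have "((\<lambda>t. c\<^sup>2 * ((1 - cos (t * c)) / (t * c)\<^sup>2)) \<longlongrightarrow> c\<^sup>2 * (1 / 2)) (at 0)"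
    by (rule tendsto_mult_left)
  then show ?thesis
    using False by (simp add: power_mult_distrib)
qed simp

lemma nn_integral_limit_add_le:
  fixes g :: "nat \<Rightarrow> 'a \<Rightarrow> real"
  assumes g: "\<And>n. integrable M (g n)" and h: "integrable M h"
    and lower: "\<And>n x. x \<in> space M \<Longrightarrow> - h x \<le> g n x"
    and lim: "\<And>x. x \<in> space M \<Longrightarrow> (\<lambda>n. g n x) \<longlonglongrightarrow> G x"
    and le: "\<And>n. integral\<^sup>L M (g n) \<le> c"
  shows "(\<integral>\<^sup>+ x. ennreal (G x + h x) \<partial>M) \<le> ennreal (c + integral\<^sup>L M h)"
proof -
  have gh: "0 \<le> g n x + h x" if "x \<in> space M" for n x
    using lower[OF that, of n] by linarith
  have "(\<integral>\<^sup>+ x. ennreal (G x + h x) \<partial>M) = (\<integral>\<^sup>+ x. liminf (\<lambda>n. ennreal (g n x + h x)) \<partial>M)"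
  proof (rule nn_integral_cong)
    fix x assume "x \<in> space M"
    then have "(\<lambda>n. ennreal (g n x + h x)) \<longlonglongrightarrow> ennreal (G x + h x)"
      by (intro tendsto_ennrealI tendsto_add lim tendsto_const)
    then show "ennreal (G x + h x) = liminf (\<lambda>n. ennreal (g n x + h x))"
      by (simp add: lim_imp_Liminf)
  qed
  also have "\<dots> \<le> liminf (\<lambda>n. \<integral>\<^sup>+ x. ennreal (g n x + h x) \<partial>M)"
    by (rule nn_integral_liminf) (use g h in auto)
  also have "\<dots> \<le> ennreal (c + integral\<^sup>L M h)"
  proof (intro order.trans[OF Liminf_le_Limsup Limsup_bounded] always_eventually allI)
    fix n
    have "(\<integral>\<^sup>+ x. ennreal (g n x + h x) \<partial>M) = ennreal (integral\<^sup>L M (\<lambda>x. g n x + h x))"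
      using g h gh by (intro nn_integral_eq_integral AE_I2) auto
    also have "integral\<^sup>L M (\<lambda>x. g n x + h x) \<le> c + integral\<^sup>L M h"
      using g h le[of n] by simp
    finally show "(\<integral>\<^sup>+ x. ennreal (g n x + h x) \<partial>M) \<le> ennreal (c + integral\<^sup>L M h)"
      by (simp add: ennreal_leI)
  qed simp
  finally show ?thesis .
qed

lemma Fatou_integrable_limit_le:
  fixes g :: "nat \<Rightarrow> 'a \<Rightarrow> real"
  assumes g: "\<And>n. integrable M (g n)" and h: "integrable M h"
    and lower: "\<And>n x. x \<in> space M \<Longrightarrow> - h x \<le> g n x"
    and lim: "\<And>x. x \<in> space M \<Longrightarrow> (\<lambda>n. g n x) \<longlonglongrightarrow> G x"
    and le: "\<And>n. integral\<^sup>L M (g n) \<le> c"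
  shows "integrable M G" "integral\<^sup>L M G \<le> c"
proof -
  have bound: "(\<integral>\<^sup>+ x. ennreal (G x + h x) \<partial>M) \<le> ennreal (c + integral\<^sup>L M h)"
    using assms by (rule nn_integral_limit_add_le)
  have gh: "0 \<le> g n x + h x" if "x \<in> space M" for n x
    using lower[OF that, of n] by linarith
  have nn: "0 \<le> G x + h x" if "x \<in> space M" for x
  proof (rule LIMSEQ_le_const)
    show "(\<lambda>n. g n x + h x) \<longlonglongrightarrow> G x + h x"
      using lim[OF that] by (rule tendsto_add) simp
    show "\<exists>N. \<forall>n\<ge>N. 0 \<le> g n x + h x"
      using gh[OF that] by blast
  qed
  have Gh: "integrable M (\<lambda>x. G x + h x)"
  proof (rule integrableI_nonneg)
    have "G \<in> borel_measurable M"
      by (rule borel_measurable_LIMSEQ_real[OF lim]) (use g in auto)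
    then show "(\<lambda>x. G x + h x) \<in> borel_measurable M"
      using h by auto
    show "AE x in M. 0 \<le> G x + h x"
      using nn by (rule AE_I2)
    show "(\<integral>\<^sup>+ x. ennreal (G x + h x) \<partial>M) < \<infinity>"
      using le_less_trans[OF bound ennreal_less_top] by simp
  qed
  show "integrable M G"
    using Bochner_Integration.integrable_diff[OF Gh h] by simp
  have "0 \<le> integral\<^sup>L M (\<lambda>x. g 0 x + h x)"
    using gh by (intro integral_nonneg_AE AE_I2)
  then have "0 \<le> c + integral\<^sup>L M h"
    using g h le[of 0] by simp
  moreover have "ennreal (integral\<^sup>L M (\<lambda>x. G x + h x)) \<le> ennreal (c + integral\<^sup>L M h)"
    using bound Gh nn by (subst (asm) nn_integral_eq_integral) (auto intro: AE_I2)
  ultimately show "integral\<^sup>L M G \<le> c"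
    using Gh h \<open>integrable M G\<close> by (simp add: ennreal_le_iff)
qed

lemma Re_fourier:
  fixes f :: "'a::euclidean_space \<Rightarrow> real"
  assumes f: "integrable lborel f"
  shows "Re (fourier f \<xi>) = (LINT y|lborel. f y * cos (2 * pi * (y \<bullet> \<xi>)))"
proof -
  have "integrable lborel (\<lambda>y. complex_of_real (f y) * cis (- 2 * pi * (y \<bullet> \<xi>)))"
  proof (rule Bochner_Integration.integrable_bound[OF f])
    have "(\<lambda>y. cis (- 2 * pi * (y \<bullet> \<xi>))) \<in> borel_measurable borel"
      by (intro borel_measurable_continuous_onI continuous_intros)
    then show "(\<lambda>y. complex_of_real (f y) * cis (- 2 * pi * (y \<bullet> \<xi>))) \<in> borel_measurable lborel"
      using f by measurable
  qed (simp add: norm_mult)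
  then show ?thesis
    unfolding fourier_def by (simp add: integral_Re[symmetric] cis.sel)
qed

lemma integrable_mult_cos_inner:
  fixes f :: "'a::euclidean_space \<Rightarrow> real"
  assumes "integrable lborel f"
  shows "integrable lborel (\<lambda>y. f y * cos (c * (y \<bullet> w)))"
proof (rule Bochner_Integration.integrable_bound[OF assms])
  show "(\<lambda>y. f y * cos (c * (y \<bullet> w))) \<in> borel_measurable lborel"
    using assms by measurable
qed (simp add: abs_mult mult_left_le)

lemma integrable_inner_power2_mult_indicator_ball:
  fixes f :: "'a::euclidean_space \<Rightarrow> real"
  assumes f: "integrable lborel f"
  shows "integrable lborel (\<lambda>y. (y \<bullet> v)\<^sup>2 * f y * indicator (ball 0 R) y)"
proof (rule Bochner_Integration.integrable_bound)
  show "integrable lborel (\<lambda>y. (R * norm v)\<^sup>2 * f y)"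
    using f by simp
  have [measurable]: "ball (0::'a) R \<in> sets borel"
    by simp
  show "(\<lambda>y. (y \<bullet> v)\<^sup>2 * f y * indicator (ball 0 R) y) \<in> borel_measurable lborel"
    using f by measurable
  show "AE y in lborel. norm ((y \<bullet> v)\<^sup>2 * f y * indicator (ball 0 R) y) \<le> norm ((R * norm v)\<^sup>2 * f y)"
  proof (rule AE_I2)
    fix y :: 'a
    show "norm ((y \<bullet> v)\<^sup>2 * f y * indicator (ball 0 R) y) \<le> norm ((R * norm v)\<^sup>2 * f y)"
    proof (cases "y \<in> ball 0 R")
      case True
      have "\<bar>y \<bullet> v\<bar> \<le> norm y * norm v"
        by (rule Cauchy_Schwarz_ineq2)
      also have "\<dots> \<le> R * norm v"
        using True by (auto intro: mult_right_mono)
      finally have "(y \<bullet> v)\<^sup>2 \<le> (R * norm v)\<^sup>2"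
        by (metis abs_ge_zero power2_abs power_mono)
      then show ?thesis
        using True by (auto simp: abs_mult intro!: mult_right_mono)
    qed simp
  qed
qed

lemma second_moment_nonpos_of_Re_fourier_ge:
  fixes f :: "'a::euclidean_space \<Rightarrow> real" and t :: "nat \<Rightarrow> real"
  assumes f: "integrable lborel f" and f_nonneg: "\<And>y. R \<le> norm y \<Longrightarrow> 0 \<le> f y"
    and t: "\<And>n. t n \<noteq> 0" "t \<longlonglongrightarrow> 0"
    and ge: "\<And>n. Re (fourier f 0) \<le> Re (fourier f (t n *\<^sub>R v))"
  shows "integrable lborel (\<lambda>y. (y \<bullet> v)\<^sup>2 * f y)" "(LINT y|lborel. (y \<bullet> v)\<^sup>2 * f y) \<le> 0"
proof -
  define a where "a y = 2 * pi * (y \<bullet> v)" for y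
  define g where "g n y = f y * (1 - cos (t n * a y)) / (t n)\<^sup>2" for n y
  define h where "h y = \<bar>f y\<bar> * (a y)\<^sup>2 / 2 * indicator (ball 0 R) y" for y
  define G where "G y = f y * (a y)\<^sup>2 / 2" for y
  have g_eq: "g n = (\<lambda>y. (f y - f y * cos (2 * pi * (y \<bullet> (t n *\<^sub>R v)))) / (t n)\<^sup>2)" for n
    by (simp add: g_def a_def fun_eq_iff right_diff_distrib mult_ac)
  have cos_int: "integrable lborel (\<lambda>y. f y * cos (2 * pi * (y \<bullet> (t n *\<^sub>R v))))" for n
    using f by (rule integrable_mult_cos_inner)
  have g_int: "integrable lborel (g n)" for n
    unfolding g_eq by (intro integrable_divide Bochner_Integration.integrable_diff f cos_int)
  have g_le: "(LINT y|lborel. g n y) \<le> 0" for n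
    using ge[of n] f cos_int[of n] Re_fourier[OF f]
    by (simp add: g_eq Bochner_Integration.integral_diff divide_nonpos_nonneg)
  have "h = (\<lambda>y. 2 * pi\<^sup>2 * ((y \<bullet> v)\<^sup>2 * \<bar>f y\<bar> * indicator (ball 0 R) y))"
    by (auto simp: fun_eq_iff h_def a_def power_mult_distrib)
  then have h_int: "integrable lborel h"
    using integrable_inner_power2_mult_indicator_ball[OF integrable_abs[OF f]] by simp
  have g_lower: "- h y \<le> g n y" for n y
  proof (cases "y \<in> ball 0 R")
    case True
    then show ?thesis
      using mult_one_minus_cos_div_square_ge[of "f y" "a y" "t n"] by (simp add: g_def h_def)
  next
    case False
    then show ?thesis
      using f_nonneg[of y] by (simp add: g_def h_def)
  qed
  have g_lim: "(\<lambda>n. g n y) \<longlonglongrightarrow> G y" for y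
  proof -
    have "filterlim t (at 0) sequentially"
      using t by (intro filterlim_atI) auto
    then have "(\<lambda>n. (1 - cos (t n * a y)) / (t n)\<^sup>2) \<longlonglongrightarrow> (a y)\<^sup>2 / 2"
      by (rule filterlim_compose[OF tendsto_one_minus_cos_div_square])
    then show ?thesis
      unfolding g_def G_def times_divide_eq_right[symmetric] by (intro tendsto_mult_left)
  qed
  have "integrable lborel G" "(LINT y|lborel. G y) \<le> 0"
    using Fatou_integrable_limit_le[of lborel g h G 0] g_int h_int g_lower g_lim g_le by auto
  moreover have "(\<lambda>y. (y \<bullet> v)\<^sup>2 * f y) = (\<lambda>y. G y / (2 * pi\<^sup>2))"
    by (auto simp: G_def a_def power_mult_distrib)
  ultimately show "integrable lborel (\<lambda>y. (y \<bullet> v)\<^sup>2 * f y)" "(LINT y|lborel. (y \<bullet> v)\<^sup>2 * f y) \<le> 0"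
    by (simp_all add: divide_nonpos_pos)
qed

lemma norm_power2_eq_sum_Basis: "(norm x)\<^sup>2 = (\<Sum>b\<in>Basis. (x \<bullet> b)\<^sup>2)"
  unfolding power2_norm_eq_inner by (subst euclidean_inner) (simp add: power2_eq_square)

lemma second_moment_nonpos_of_inner_Basis:
  fixes f :: "'a::euclidean_space \<Rightarrow> real"
  assumes int: "\<And>b. b \<in> Basis \<Longrightarrow> integrable M (\<lambda>y. (y \<bullet> b)\<^sup>2 * f y)"
    and nonpos: "\<And>b. b \<in> Basis \<Longrightarrow> (\<integral>y. (y \<bullet> b)\<^sup>2 * f y \<partial>M) \<le> 0"
  shows "integrable M (\<lambda>y. (norm y)\<^sup>2 * f y)" "(\<integral>y. (norm y)\<^sup>2 * f y \<partial>M) \<le> 0"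
proof -
  have eq: "(\<lambda>y. (norm y)\<^sup>2 * f y) = (\<lambda>y. \<Sum>b\<in>Basis. (y \<bullet> b)\<^sup>2 * f y)"
    by (simp add: norm_power2_eq_sum_Basis sum_distrib_right)
  show "integrable M (\<lambda>y. (norm y)\<^sup>2 * f y)"
    unfolding eq using int by (rule Bochner_Integration.integrable_sum)
  show "(\<integral>y. (norm y)\<^sup>2 * f y \<partial>M) \<le> 0"
    unfolding eq using int nonpos by (subst Bochner_Integration.integral_sum) (auto intro: sum_nonpos)
qed

theorem lemma1:
  fixes f :: "'a::euclidean_space \<Rightarrow> real" and s :: real
  assumes s: "s = 1 \<or> s = -1"
    and fA: "f \<in> A_s s"
    and rad: "radial f"
    and eig: "\<forall>\<xi>. fourier f \<xi> = complex_of_real (s * f \<xi>)"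
    and f0: "f 0 = 0"
    and seq: "\<exists>x :: nat \<Rightarrow> 'a. (\<forall>n. x n \<noteq> 0) \<and> x \<longlonglongrightarrow> 0 \<and> (\<forall>n. 0 \<le> s * f (x n))"
  shows "integrable lborel (\<lambda>y. norm y ^ 2 * f y)
    \<and> (LINT y|lborel. norm y ^ 2 * f y) \<le> 0"
proof -
  have f: "integrable lborel f" and "eventually_nonneg f"
    using fA by (auto simp: A_s_def A_plus_def A_minus_def admissible_def split: if_splits)
  then obtain R where R: "\<And>y. R \<le> norm y \<Longrightarrow> 0 \<le> f y"
    unfolding eventually_nonneg_def by blast
  obtain x :: "nat \<Rightarrow> 'a" where x: "\<And>n. x n \<noteq> 0" "x \<longlonglongrightarrow> 0" "\<And>n. 0 \<le> s * f (x n)"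
    using seq by blast
  have t: "\<And>n. norm (x n) \<noteq> 0" "(\<lambda>n. norm (x n)) \<longlonglongrightarrow> 0"
    using x tendsto_norm_zero by auto
  have "Re (fourier f 0) \<le> Re (fourier f (norm (x n) *\<^sub>R b))" if "b \<in> Basis" for n b
  proof -
    have "f (norm (x n) *\<^sub>R b) = f (x n)"
      using that by (intro rad[unfolded radial_def, rule_format]) simp
    then show ?thesis
      using eig f0 x(3)[of n] by simp
  qed
  then show ?thesis
    using second_moment_nonpos_of_inner_Basis second_moment_nonpos_of_Re_fourier_ge[OF f R t]
    by blast
qed

end
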